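(* Let $\Gamma=(V,E)$ be a strongly connected digraph with diameter $D\ge 2$. Let $X=\{x_1,\ldots,x_r\}\subset V$ with $r\ge 2$ be such that all vertices of $X$ have the same set of in-neighbors, say $Y=\Gamma^-(x_i)$ for $i=1,\ldots,r$, and let $Z=\Gamma^+(X)$. Let $\Gamma'$ be a digraph obtained from $\Gamma$ by replacing the set of arcs $e(X,Z)$ by another set of arcs $e'(X,Z)$ (all other arcs unchanged) such that: (i) $e'(Y,X)\cap e'(X,Z)=e(Y,X)\cap e(X,Z)$, where $e'(Y,X)$ denotes the set of arcs from $Y$ to $X$ in $\Gamma'$; (ii) considering the arcs that are not loops, every vertex of $X$ has some out-going arc in $\Gamma'$ to a vertex of $Z$, and every vertex of $Z$ has some in-going arc in $\Gamma'$ from a vertex of $X$. Assume moreover that every vertex of $Z$ has the same number of in-going arcs in $\Gamma'$ as in $\Gamma$, i.e. $|\Gamma'^-(v)|=|\Gamma^-(v)|$ for every $v\in Z$. Let $A$ and $A'$ be the adjacency matrices of $\Gamma$ and $\Gamma'$ (indexed by $V$ in the same order). Then for every polynomial $p\in\mathbb{R}[x]$ without constant term, written $p(x)=xq(x)$ with $\deg q=\deg p-1$, we have $$p(A')=A'\,q(A).$$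
   Context: For a vertex $v$, $\Gamma^-(v)$, $\Gamma'^-(v)$ denote the sets of in-neighbors of $v$ in $\Gamma$, $\Gamma'$ respectively, and $\Gamma^+(v)$ the out-neighbors; $\Gamma^+(U)$ is the set of vertices adjacent from some vertex of $U$. For $X,Y\subset V$, $e(X,Y)$ denotes the set of arcs from $X$ to $Y$ in $\Gamma$ ($e'(X,Y)$ in $\Gamma'$). A loop is an arc from a vertex to itself. The adjacency matrix $A=(a_{uv})$ has $a_{uv}=1$ if $(u,v)$ is an arc and $0$ otherwise. *)

theory Defs
  imports "HOL-Analysis.Analysis" "HOL-Computational_Algebra.Polynomial"
begin

text \<open>A digraph (loops allowed) on the finite vertex type 'v is given by its arc
  relation E, where E u v means (u,v) is an arc.\<close>

definition in_nbrs :: "('v \<Rightarrow> 'v \<Rightarrow> bool) \<Rightarrow> 'v \<Rightarrow> 'v set" where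
  "in_nbrs E v = {u. E u v}"

definition out_nbrs_set :: "('v \<Rightarrow> 'v \<Rightarrow> bool) \<Rightarrow> 'v set \<Rightarrow> 'v set" where
  "out_nbrs_set E U = {v. \<exists>u\<in>U. E u v}"

definition arcs_between :: "('v \<Rightarrow> 'v \<Rightarrow> bool) \<Rightarrow> 'v set \<Rightarrow> 'v set \<Rightarrow> ('v \<times> 'v) set" where
  "arcs_between E S T = {(u, v). u \<in> S \<and> v \<in> T \<and> E u v}"

definition strongly_connected :: "('v \<Rightarrow> 'v \<Rightarrow> bool) \<Rightarrow> bool" where
  "strongly_connected E \<longleftrightarrow> (\<forall>u v. E\<^sup>*\<^sup>* u v)"

definition gdist :: "('v \<Rightarrow> 'v \<Rightarrow> bool) \<Rightarrow> 'v \<Rightarrow> 'v \<Rightarrow> nat" where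
  "gdist E u v = (LEAST k. (E ^^ k) u v)"

definition diameter :: "('v::finite \<Rightarrow> 'v \<Rightarrow> bool) \<Rightarrow> nat" where
  "diameter E = Max {gdist E u v | u v. True}"

definition adj_matrix :: "('v::finite \<Rightarrow> 'v \<Rightarrow> bool) \<Rightarrow> real ^ 'v ^ 'v" where
  "adj_matrix E = (\<chi> u v. if E u v then 1 else 0)"

primrec matpow :: "real ^ 'n ^ 'n \<Rightarrow> nat \<Rightarrow> real ^ 'n ^ 'n" where
  "matpow A 0 = mat 1"
| "matpow A (Suc k) = A ** matpow A k"

definition poly_mat :: "real poly \<Rightarrow> real ^ 'n ^ 'n \<Rightarrow> real ^ 'n ^ 'n" where
  "poly_mat p A = (\<Sum>i\<le>degree p. coeff p i *\<^sub>R matpow A i)"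

end

theory Submission
  imports Defs
begin

text \<open>Only arcs leaving X change, and the vertices of X are in-twins in \<open>\<Gamma>'\<close> with common
  in-neighbourhood Y. So the entry \<open>(u,v)\<close> of \<open>A'(A' - A)\<close> is \<open>[u \<in> Y]\<close> times the difference of
  the in-degrees of v in \<open>\<Gamma>'\<close> and \<open>\<Gamma>\<close>, which is zero: \<open>A'\<^sup>2 = A'A\<close>. By induction
  \<open>A'\<^bsup>k+1\<^esup> = A'A\<^sup>k\<close>, and summing gives \<open>p(A') = A'q(A)\<close>.\<close>

lemma in_nbrs_eq_of_arcs_into_X_kept:
  fixes E E' :: "'v::finite \<Rightarrow> 'v \<Rightarrow> bool"
  assumes Y: "\<forall>x\<in>X. in_nbrs E x = Y"
    and other: "\<forall>u v. \<not> (u \<in> X \<and> v \<in> Z) \<longrightarrow> (E' u v \<longleftrightarrow> E u v)"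
    and cond_i: "arcs_between E' Y X \<inter> arcs_between E' X Z = arcs_between E Y X \<inter> arcs_between E X Z"
    and indeg: "\<forall>v\<in>Z. card (in_nbrs E' v) = card (in_nbrs E v)"
    and w: "w \<in> X"
  shows "in_nbrs E' w = Y"
proof (cases "w \<in> Z")
  case False
  then show ?thesis using other Y w by (auto simp: in_nbrs_def)
next
  case True
  have "in_nbrs E w \<subseteq> in_nbrs E' w"
  proof
    fix a assume a: "a \<in> in_nbrs E w"
    then have "a \<in> Y" and "E a w" using Y w by (auto simp: in_nbrs_def)
    show "a \<in> in_nbrs E' w"
    proof (cases "a \<in> X")
      case False
      then show ?thesis using other \<open>E a w\<close> by (auto simp: in_nbrs_def)
    next
      case True
      then have "(a, w) \<in> arcs_between E Y X \<inter> arcs_between E X Z"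
        using \<open>a \<in> Y\<close> \<open>E a w\<close> w \<open>w \<in> Z\<close> by (auto simp: arcs_between_def)
      then have "(a, w) \<in> arcs_between E' Y X" using cond_i by blast
      then show ?thesis by (auto simp: arcs_between_def in_nbrs_def)
    qed
  qed
  then have "in_nbrs E w = in_nbrs E' w"
    by (rule card_subset_eq[rotated]) (use indeg True in auto)
  then show ?thesis using Y w by simp
qed

lemma card_in_nbrs_eq_sum: "real (card (in_nbrs E (v::'v::finite))) = (\<Sum>w\<in>UNIV. if E w v then 1 else 0)"
  by (simp add: in_nbrs_def sum.If_cases)

lemma adj_matrix_mult_eq_if_in_twins:
  fixes E E' :: "'v::finite \<Rightarrow> 'v \<Rightarrow> bool"
  assumes twins: "\<forall>w\<in>X. in_nbrs E' w = Y"
    and rows: "\<forall>u v. u \<notin> X \<longrightarrow> (E' u v \<longleftrightarrow> E u v)"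
    and indeg: "\<forall>v. card (in_nbrs E' v) = card (in_nbrs E v)"
  shows "adj_matrix E' ** adj_matrix E' = adj_matrix E' ** adj_matrix E"
proof -
  let ?a = "\<lambda>F u v. if F u v then 1 else 0 :: real"
  have "(\<Sum>w\<in>UNIV. ?a E' u w * ?a E' w v) - (\<Sum>w\<in>UNIV. ?a E' u w * ?a E w v) = 0" for u v
  proof -
    have "(\<Sum>w\<in>UNIV. ?a E' u w * ?a E' w v) - (\<Sum>w\<in>UNIV. ?a E' u w * ?a E w v)
        = (\<Sum>w\<in>UNIV. ?a E' u w * (?a E' w v - ?a E w v))"
      by (simp add: sum_subtractf[symmetric] right_diff_distrib)
    also have "\<dots> = (\<Sum>w\<in>UNIV. (if u \<in> Y then 1 else 0) * (?a E' w v - ?a E w v))"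
      by (rule sum.cong) (use twins rows in \<open>auto simp: in_nbrs_def\<close>)
    also have "\<dots> = (if u \<in> Y then 1 else 0) * (real (card (in_nbrs E' v)) - real (card (in_nbrs E v)))"
      by (simp add: card_in_nbrs_eq_sum sum_subtractf sum_distrib_left[symmetric])
    also have "\<dots> = 0" using indeg by simp
    finally show ?thesis .
  qed
  then show ?thesis
    by (simp add: adj_matrix_def matrix_matrix_mult_def vec_eq_iff)
qed

lemma matpow_Suc_eq_if_square_eq:
  assumes "A' ** A' = A' ** A"
  shows "matpow A' (Suc k) = A' ** matpow A k"
proof (induction k)
  case 0
  then show ?case by simp
next
  case (Suc k)
  have "matpow A' (Suc (Suc k)) = (A' ** A') ** matpow A k"
    using Suc by (simp add: matrix_mul_assoc)
  also have "\<dots> = A' ** matpow A (Suc k)"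
    using assms by (simp add: matrix_mul_assoc)
  finally show ?case .
qed

lemma poly_mat_eq_sum_atMost:
  assumes "degree p \<le> n"
  shows "poly_mat p A = (\<Sum>i\<le>n. coeff p i *\<^sub>R matpow A i)"
  unfolding poly_mat_def
  by (rule sum.mono_neutral_left) (use assms in \<open>auto intro: coeff_eq_0 simp: not_le\<close>)

lemma matrix_mul_sum_scaleR:
  fixes A :: "real ^ 'n::finite ^ 'n" and B :: "'i \<Rightarrow> real ^ 'n ^ 'n"
  assumes "finite I"
  shows "A ** (\<Sum>i\<in>I. c i *\<^sub>R B i) = (\<Sum>i\<in>I. c i *\<^sub>R (A ** B i))"
  using assms
  by (induction I rule: finite_induct)
    (simp_all add: matrix_add_ldistrib matrix_scalar_ac scalar_matrix_assoc)

lemma poly_mat_pCons_0_eq_if_square_eq: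
  assumes "A' ** A' = A' ** A"
  shows "poly_mat (pCons 0 q) A' = A' ** poly_mat q A"
proof -
  have "poly_mat (pCons 0 q) A' = (\<Sum>i\<le>Suc (degree q). coeff (pCons 0 q) i *\<^sub>R matpow A' i)"
    by (rule poly_mat_eq_sum_atMost) (simp add: degree_pCons_le)
  also have "\<dots> = (\<Sum>i\<le>degree q. coeff q i *\<^sub>R matpow A' (Suc i))"
    by (subst sum.atMost_Suc_shift) simp
  also have "\<dots> = (\<Sum>i\<le>degree q. coeff q i *\<^sub>R (A' ** matpow A i))"
    using matpow_Suc_eq_if_square_eq[OF assms] by simp
  also have "\<dots> = A' ** poly_mat q A"
    by (simp add: poly_mat_def matrix_mul_sum_scaleR)
  finally show ?thesis .
qed

theorem mainTheorem3:
  fixes E E' :: "'v::finite \<Rightarrow> 'v \<Rightarrow> bool"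
    and X Y Z :: "'v set"
    and p q :: "real poly"
  assumes sc: "strongly_connected E"
    and diam: "diameter E \<ge> 2"
    and cardX: "card X \<ge> 2"
    and Y: "\<forall>x\<in>X. in_nbrs E x = Y"
    and Z: "Z = out_nbrs_set E X"
    and other: "\<forall>u v. \<not> (u \<in> X \<and> v \<in> Z) \<longrightarrow> (E' u v \<longleftrightarrow> E u v)"
    and cond_i: "arcs_between E' Y X \<inter> arcs_between E' X Z = arcs_between E Y X \<inter> arcs_between E X Z"
    and cond_ii_X: "\<forall>x\<in>X. \<exists>z\<in>Z. z \<noteq> x \<and> E' x z"
    and cond_ii_Z: "\<forall>z\<in>Z. \<exists>x\<in>X. x \<noteq> z \<and> E' x z"
    and indeg: "\<forall>v\<in>Z. card (in_nbrs E' v) = card (in_nbrs E v)"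
    and pq: "p = [:0, 1:] * q"
  shows "poly_mat p (adj_matrix E') = adj_matrix E' ** poly_mat q (adj_matrix E)"
proof -
  have twins: "\<forall>w\<in>X. in_nbrs E' w = Y"
    using in_nbrs_eq_of_arcs_into_X_kept[OF Y other cond_i indeg] by blast
  have "card (in_nbrs E' v) = card (in_nbrs E v)" for v
  proof (cases "v \<in> Z")
    case False
    then have "in_nbrs E' v = in_nbrs E v" using other by (auto simp: in_nbrs_def)
    then show ?thesis by simp
  qed (use indeg in simp)
  then have "adj_matrix E' ** adj_matrix E' = adj_matrix E' ** adj_matrix E"
    using adj_matrix_mult_eq_if_in_twins[OF twins] other by blast
  moreover have "p = pCons 0 q" using pq by simp
  ultimately show ?thesis by (simp add: poly_mat_pCons_0_eq_if_square_eq)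
qed

end
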